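(* Let $d\ge2$ and suppose $f:\mathbb{R}^d_+\to\mathbb{R}$ is uniformly continuous with $\mathrm{supp}(f)\subset[0,1]^d$. Let $u,v:\overline{\mathbb{R}^d_+}\to\mathbb{R}$ be continuous, with $u$ a viscosity subsolution and $v$ a viscosity supersolution of \[u_{x_1}\cdots u_{x_d}=f\quad\text{on }\mathbb{R}^d_+,\] and suppose that $u(x)=u(\min(x_1,1),\dots,\min(x_d,1))$ for all $x\in\mathbb{R}^d_+$, and that $v$ is Pareto-monotone. If $u\le v$ on $\partial\mathbb{R}^d_+$, then $u\le v$ on $\mathbb{R}^d_+$.
   Context: $\mathbb{R}^d_+=\{x:x_i>0\ \forall i\}$; $x\leqq y$ means $x_i\le y_i$ for all $i$. A function $v$ is Pareto-monotone if $x\leqq y$ implies $v(x)\le v(y)$. Superdifferential $D^+u(x)$: all $p$ with $u(y)\le u(x)+\langle p,y-x\rangle+o(|y-x|)$ as $y\to x$; subdifferential $D^-u(x)$ defined with $\ge$. A continuous $u$ is a viscosity subsolution of $u_{x_1}\cdots u_{x_d}=f$ on $\mathbb{R}^d_+$ if $p_1\cdots p_d\le f^*(x)$ for all $x\in\mathbb{R}^d_+$, $p\in D^+u(x)$, and a viscosity supersolution if $p_1\cdots p_d\ge f_*(x)$ for all $x\in\mathbb{R}^d_+$, $p\in D^-u(x)$, where $f^*,f_*$ are the upper and lower semicontinuous envelopes of $f$. *)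

theory Defs
  imports "HOL-Analysis.Analysis" "HOL-Library.Extended_Real"
begin

definition pos_orthant :: "(real^'n) set" where
  "pos_orthant = {x. \<forall>i. 0 < x $ i}"

definition cl_orthant :: "(real^'n) set" where
  "cl_orthant = {x. \<forall>i. 0 \<le> x $ i}"

definition pareto_le :: "real^'n \<Rightarrow> real^'n \<Rightarrow> bool" where
  "pareto_le x y \<longleftrightarrow> (\<forall>i. x $ i \<le> y $ i)"

definition pareto_monotone_on :: "(real^'n) set \<Rightarrow> (real^'n \<Rightarrow> real) \<Rightarrow> bool" where
  "pareto_monotone_on S v \<longleftrightarrow> (\<forall>x\<in>S. \<forall>y\<in>S. pareto_le x y \<longrightarrow> v x \<le> v y)"

definition superdiff :: "(real^'n \<Rightarrow> real) \<Rightarrow> real^'n \<Rightarrow> (real^'n) set" where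
  "superdiff u x = {p. \<forall>e>0. \<forall>\<^sub>F y in at x. u y \<le> u x + p \<bullet> (y - x) + e * norm (y - x)}"

definition subdiff :: "(real^'n \<Rightarrow> real) \<Rightarrow> real^'n \<Rightarrow> (real^'n) set" where
  "subdiff u x = {p. \<forall>e>0. \<forall>\<^sub>F y in at x. u y \<ge> u x + p \<bullet> (y - x) - e * norm (y - x)}"

definition usc_env :: "(real^'n) set \<Rightarrow> (real^'n \<Rightarrow> real) \<Rightarrow> real^'n \<Rightarrow> ereal" where
  "usc_env S f x = (INF r\<in>{0<..}. SUP y\<in>S \<inter> ball x r. ereal (f y))"

definition lsc_env :: "(real^'n) set \<Rightarrow> (real^'n \<Rightarrow> real) \<Rightarrow> real^'n \<Rightarrow> ereal" where
  "lsc_env S f x = (SUP r\<in>{0<..}. INF y\<in>S \<inter> ball x r. ereal (f y))"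

definition visc_subsol :: "(real^'n \<Rightarrow> real) \<Rightarrow> (real^'n \<Rightarrow> real) \<Rightarrow> bool" where
  "visc_subsol f u \<longleftrightarrow> continuous_on cl_orthant u \<and>
     (\<forall>x\<in>pos_orthant. \<forall>p\<in>superdiff u x. ereal (\<Prod>i\<in>UNIV. p $ i) \<le> usc_env pos_orthant f x)"

definition visc_supersol :: "(real^'n \<Rightarrow> real) \<Rightarrow> (real^'n \<Rightarrow> real) \<Rightarrow> bool" where
  "visc_supersol f v \<longleftrightarrow> continuous_on cl_orthant v \<and>
     (\<forall>x\<in>pos_orthant. \<forall>p\<in>subdiff v x. ereal (\<Prod>i\<in>UNIV. p $ i) \<ge> lsc_env pos_orthant f x)"

end

theory Submission
  imports Defs
begin

text \<open>
  Doubling of variables. Since \<open>u\<close> only sees the point clipped to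
  \<open>[0,1]\<^sup>d\<close> and \<open>v\<close> is Pareto-monotone, it suffices to compare on the unit cube, where we maximise
  \<open>u x - v y - \<epsilon> \<Sum>\<^sub>i y\<^sub>i - c |x - y|\<^sup>2\<close>. For large \<open>c\<close> a maximiser \<open>(x, y)\<close> is nearly diagonal,
  so the boundary condition and uniform continuity of \<open>u, v\<close> put both points in the open orthant.
  There \<open>q = 2c (x - y)\<close> is a supergradient of \<open>u\<close> at \<open>x\<close> and \<open>q - \<epsilon>\<one>\<close> a subgradient of \<open>v\<close> at \<open>y\<close>;
  the latter has nonnegative entries by monotonicity, so
  \<open>f x \<ge> \<Prod> q \<ge> \<Prod> (q - \<epsilon>\<one>) + \<epsilon>\<^sup>d \<ge> f y + \<epsilon>\<^sup>d\<close>, contradicting uniform continuity of \<open>f\<close>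
  as \<open>|x - y| \<rightarrow> 0\<close>. Letting \<open>\<epsilon> \<rightarrow> 0\<close> gives \<open>u \<le> v\<close>.
\<close>

lemma prod_add_const_ge:
  fixes a :: "'i \<Rightarrow> real"
  assumes "finite I" "I \<noteq> {}" "\<And>i. i \<in> I \<Longrightarrow> 0 \<le> a i" "0 \<le> e"
  shows "(\<Prod>i\<in>I. a i) + e ^ card I \<le> (\<Prod>i\<in>I. a i + e)"
  using assms
proof (induction I rule: finite_ne_induct)
  case (singleton j)
  then show ?case by simp
next
  case (insert j I)
  have "(\<Prod>i\<in>insert j I. a i) + e ^ card (insert j I) \<le> (a j + e) * ((\<Prod>i\<in>I. a i) + e ^ card I)"
    using insert by (simp add: algebra_simps prod_nonneg)
  also have "\<dots> \<le> (a j + e) * (\<Prod>i\<in>I. a i + e)"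
    using insert by (intro mult_left_mono) auto
  finally show ?case
    using insert by simp
qed

lemma subdiff_iff_superdiff_uminus: "p \<in> subdiff v x \<longleftrightarrow> - p \<in> superdiff (\<lambda>y. - v y) x"
  unfolding subdiff_def superdiff_def by (simp add: algebra_simps)

lemma subdiff_add_linear:
  assumes "p \<in> subdiff (\<lambda>y. v y + a \<bullet> y) x"
  shows "p - a \<in> subdiff v x"
  using assms unfolding subdiff_def by (simp add: algebra_simps)

lemma superdiff_of_quadratic_bound:
  fixes u :: "real^'n \<Rightarrow> real"
  assumes "open S" "x \<in> S"
    and "\<And>y. y \<in> S \<Longrightarrow> u y \<le> u x + p \<bullet> (y - x) + c * norm (y - x)^2"
  shows "p \<in> superdiff u x"
  unfolding superdiff_def
proof (intro CollectI allI impI)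
  fix e :: real
  assume "e > 0"
  define c' where "c' = \<bar>c\<bar> + 1"
  have "c' > 0"
    by (simp add: c'_def add_nonneg_pos)
  obtain r where "r > 0" "ball x r \<subseteq> S"
    using assms(1,2) open_contains_ball by blast
  show "\<forall>\<^sub>F y in at x. u y \<le> u x + p \<bullet> (y - x) + e * norm (y - x)"
    unfolding eventually_at
  proof (intro exI[of _ "min r (e / c')"] conjI ballI impI)
    show "min r (e / c') > 0"
      using \<open>r > 0\<close> \<open>e > 0\<close> \<open>c' > 0\<close> by simp
    fix y
    assume y: "y \<noteq> x \<and> dist y x < min r (e / c')"
    then have "y \<in> S"
      using \<open>ball x r \<subseteq> S\<close> by (auto simp: dist_commute)
    have "c' * norm (y - x) \<le> e"
      using y \<open>c' > 0\<close> by (simp add: dist_norm field_simps)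
    have "c * norm (y - x)^2 \<le> c' * norm (y - x)^2"
      by (intro mult_right_mono) (auto simp: c'_def)
    also have "\<dots> = (c' * norm (y - x)) * norm (y - x)"
      by (simp add: power2_eq_square)
    also have "\<dots> \<le> e * norm (y - x)"
      using \<open>c' * norm (y - x) \<le> e\<close> by (simp add: mult_right_mono)
    finally have "c * norm (y - x)^2 \<le> e * norm (y - x)" .
    then show "u y \<le> u x + p \<bullet> (y - x) + e * norm (y - x)"
      using assms(3)[OF \<open>y \<in> S\<close>] by linarith
  qed
qed

lemma superdiff_at_max_minus_paraboloid:
  fixes u :: "real^'n \<Rightarrow> real"
  assumes "open S" "x \<in> S"
    and "\<And>y. y \<in> S \<Longrightarrow> u y - c * norm (y - a)^2 \<le> u x - c * norm (x - a)^2"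
  shows "(2 * c) *\<^sub>R (x - a) \<in> superdiff u x"
proof (rule superdiff_of_quadratic_bound[OF assms(1,2)])
  fix y
  assume "y \<in> S"
  have "c * norm (y - a)^2 = c * norm (x - a)^2 + (2 * c) *\<^sub>R (x - a) \<bullet> (y - x) + c * norm (y - x)^2"
    by (simp add: power2_norm_eq_inner algebra_simps inner_commute)
  then show "u y \<le> u x + (2 * c) *\<^sub>R (x - a) \<bullet> (y - x) + c * norm (y - x)^2"
    using assms(3)[OF \<open>y \<in> S\<close>] by linarith
qed

lemma subdiff_at_min_plus_paraboloid:
  fixes v :: "real^'n \<Rightarrow> real"
  assumes "open S" "x \<in> S"
    and "\<And>y. y \<in> S \<Longrightarrow> v x + c * norm (x - a)^2 \<le> v y + c * norm (y - a)^2"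
  shows "(2 * c) *\<^sub>R (a - x) \<in> subdiff v x"
proof -
  have "(2 * c) *\<^sub>R (x - a) \<in> superdiff (\<lambda>y. - v y) x"
  proof (rule superdiff_at_max_minus_paraboloid[OF assms(1,2)])
    fix y
    assume "y \<in> S"
    then show "- v y - c * norm (y - a)^2 \<le> - v x - c * norm (x - a)^2"
      using assms(3) by fastforce
  qed
  then show ?thesis
    by (simp add: subdiff_iff_superdiff_uminus scaleR_diff_right)
qed

lemma open_pos_orthant: "open pos_orthant"
proof -
  have "pos_orthant = (\<Inter>i. {x::real^'n. 0 < x $ i})"
    by (auto simp: pos_orthant_def)
  show ?thesis
    unfolding \<open>pos_orthant = _\<close> by (auto intro!: open_INT open_Collect_less continuous_intros)
qed

lemma pos_orthant_subset_cl_orthant: "pos_orthant \<subseteq> cl_orthant"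
  by (auto simp: pos_orthant_def cl_orthant_def less_imp_le)

lemma subdiff_nonneg_if_pareto_monotone:
  fixes v :: "real^'n \<Rightarrow> real"
  assumes "pareto_monotone_on cl_orthant v" "x \<in> pos_orthant" "p \<in> subdiff v x"
  shows "0 \<le> p $ i"
proof (rule ccontr)
  assume "\<not> 0 \<le> p $ i"
  define e where "e = - p $ i / 2"
  have "e > 0"
    using \<open>\<not> 0 \<le> p $ i\<close> by (simp add: e_def)
  then obtain d where "d > 0"
    and d: "\<And>y. y \<noteq> x \<Longrightarrow> dist y x < d \<Longrightarrow> v x + p \<bullet> (y - x) - e * norm (y - x) \<le> v y"
    using assms(3) unfolding subdiff_def eventually_at by auto
  have "0 < x $ i"
    using assms(2) by (simp add: pos_orthant_def)
  define t where "t = min (d / 2) (x $ i)"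
  have t: "0 < t" "t < d" "t \<le> x $ i"
    using \<open>d > 0\<close> \<open>0 < x $ i\<close> by (auto simp: t_def)
  \<comment> \<open>lowering coordinate \<open>i\<close> cannot increase \<open>v\<close>, but a negative \<open>p $ i\<close> would force it to\<close>
  define y where "y = x - t *\<^sub>R axis i 1"
  have "norm (y - x) = t"
    using t by (simp add: y_def)
  then have "v x + t * (- p $ i) - e * t \<le> v y"
    using d[of y] t by (simp add: y_def dist_norm inner_axis)
  moreover have "y \<in> cl_orthant" "pareto_le y x"
    using assms(2) t by (auto simp: y_def cl_orthant_def pos_orthant_def pareto_le_def axis_def less_imp_le)
  then have "v y \<le> v x"
    using assms(1,2) pos_orthant_subset_cl_orthant unfolding pareto_monotone_on_def by blast
  ultimately have "0 \<le> t * p $ i"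
    by (simp add: e_def algebra_simps)
  then show False
    using t \<open>\<not> 0 \<le> p $ i\<close> by (simp add: zero_le_mult_iff)
qed

lemma usc_env_le_if_continuous:
  assumes "continuous_on S f" "x \<in> S"
  shows "usc_env S f x \<le> ereal (f x)"
proof (rule ereal_le_epsilon2)
  fix e :: real
  assume "e > 0"
  then obtain r where "r > 0" and r: "\<And>y. y \<in> S \<Longrightarrow> dist y x < r \<Longrightarrow> dist (f y) (f x) < e"
    using assms unfolding continuous_on_iff by metis
  have "usc_env S f x \<le> (SUP y\<in>S \<inter> ball x r. ereal (f y))"
    unfolding usc_env_def using \<open>r > 0\<close> by (intro INF_lower) auto
  also have "\<dots> \<le> ereal (f x) + ereal e"
    using r by (intro SUP_least) (force simp: dist_commute dist_real_def)
  finally show "usc_env S f x \<le> ereal (f x) + ereal e" .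
qed

lemma lsc_env_ge_if_continuous:
  assumes "continuous_on S f" "x \<in> S"
  shows "ereal (f x) \<le> lsc_env S f x"
proof -
  have "lsc_env S f x = - usc_env S (\<lambda>y. - f y) x"
    unfolding lsc_env_def usc_env_def ereal_SUP_uminus_eq[symmetric] ereal_INF_uminus_eq[symmetric]
    by simp
  moreover have "usc_env S (\<lambda>y. - f y) x \<le> ereal (- f x)"
    using assms by (intro usc_env_le_if_continuous continuous_intros)
  then have "- ereal (- f x) \<le> - usc_env S (\<lambda>y. - f y) x"
    by (simp only: ereal_minus_le_minus)
  ultimately show ?thesis
    by simp
qed

lemma visc_gap_at_common_gradient:
  fixes f u v :: "real^'n \<Rightarrow> real"
  assumes "visc_subsol f u" "visc_supersol f v" "pareto_monotone_on cl_orthant v"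
    and "continuous_on pos_orthant f" "x \<in> pos_orthant" "y \<in> pos_orthant" "0 \<le> e"
    and "q \<in> superdiff u x" "q - e *\<^sub>R 1 \<in> subdiff v y"
  shows "f y + e ^ CARD('n) \<le> f x"
proof -
  define p where "p = q - e *\<^sub>R 1"
  have "0 \<le> p $ i" for i
    using subdiff_nonneg_if_pareto_monotone[OF assms(3,6)] assms(9) unfolding p_def by blast
  then have "(\<Prod>i\<in>UNIV. p $ i) + e ^ CARD('n) \<le> (\<Prod>i\<in>UNIV. q $ i)"
    using prod_add_const_ge[of UNIV "\<lambda>i. p $ i" e] \<open>0 \<le> e\<close> by (simp add: p_def)
  moreover have "ereal (\<Prod>i\<in>UNIV. q $ i) \<le> ereal (f x)"
    using assms(1,4,5,8) usc_env_le_if_continuous order_trans unfolding visc_subsol_def by blast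
  moreover have "ereal (f y) \<le> ereal (\<Prod>i\<in>UNIV. p $ i)"
    using assms(2,4,6,9) lsc_env_ge_if_continuous order_trans unfolding visc_supersol_def p_def by blast
  ultimately show ?thesis
    by simp
qed

lemma penalized_maximum_near_diagonal:
  fixes \<Psi> :: "'a::real_normed_vector \<times> 'a \<Rightarrow> real"
  assumes "compact K" "K \<noteq> {}" "continuous_on (K \<times> K) \<Psi>" "0 < \<eta>"
  obtains c x y where "0 < c" "x \<in> K" "y \<in> K" "norm (x - y) < \<eta>"
    "\<And>x' y'. x' \<in> K \<Longrightarrow> y' \<in> K \<Longrightarrow> \<Psi> (x', y') - c * norm (x' - y')^2 \<le> \<Psi> (x, y) - c * norm (x - y)^2"
proof -
  have "compact (K \<times> K)"
    using assms(1) assms(1) by (rule compact_Times)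
  then obtain B where B: "\<And>w. w \<in> K \<times> K \<Longrightarrow> \<bar>\<Psi> w\<bar> \<le> B"
    using compact_imp_bounded[OF compact_continuous_image[OF assms(3)]]
    unfolding bounded_iff by auto
  define c where "c = (2 * B + 1) / \<eta>^2"
  have "0 \<le> B"
    using B assms(2) by fastforce
  then have "0 < c"
    using assms(4) by (simp add: c_def)
  have "continuous_on (K \<times> K) (\<lambda>w. \<Psi> w - c * norm (fst w - snd w)^2)"
    by (intro continuous_intros assms(3))
  then obtain w where w: "w \<in> K \<times> K"
    and max: "\<And>w'. w' \<in> K \<times> K \<Longrightarrow> \<Psi> w' - c * norm (fst w' - snd w')^2 \<le> \<Psi> w - c * norm (fst w - snd w)^2"
    using continuous_attains_sup[OF \<open>compact (K \<times> K)\<close>] assms(2) by blast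
  obtain x y where "w = (x, y)" "x \<in> K" "y \<in> K"
    using w by auto
  obtain z where "z \<in> K"
    using assms(2) by blast
  \<comment> \<open>comparing with a diagonal point \<open>(z, z)\<close>, where the penalty vanishes\<close>
  have "c * norm (x - y)^2 \<le> \<Psi> (x, y) - \<Psi> (z, z)"
    using max[of "(z, z)"] \<open>z \<in> K\<close> by (simp add: \<open>w = (x, y)\<close>)
  also have "\<dots> < c * \<eta>^2"
    using B[of "(x, y)"] B[of "(z, z)"] \<open>x \<in> K\<close> \<open>y \<in> K\<close> \<open>z \<in> K\<close> assms(4)
    by (simp add: c_def)
  finally have "norm (x - y)^2 < \<eta>^2"
    using \<open>0 < c\<close> by simp
  then have "norm (x - y) < \<eta>"
    using assms(4) by (simp add: power_less_imp_less_base)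
  then show ?thesis
    using that \<open>0 < c\<close> \<open>x \<in> K\<close> \<open>y \<in> K\<close> max \<open>w = (x, y)\<close> by force
qed

definition clip :: "real^'n \<Rightarrow> real^'n" where
  "clip x = (\<chi> i. min (x $ i) 1)"

lemma clip_in_unit_cube: "x \<in> pos_orthant \<Longrightarrow> clip x \<in> cbox 0 1"
  by (simp add: clip_def pos_orthant_def mem_box_cart less_imp_le)

lemma unit_cube_subset_cl_orthant: "cbox 0 1 \<subseteq> cl_orthant"
  by (auto simp: cl_orthant_def mem_box_cart)

lemma inner_one_nonneg: "x \<in> cl_orthant \<Longrightarrow> 0 \<le> 1 \<bullet> x"
  unfolding inner_vec_def cl_orthant_def by (auto intro: sum_nonneg)

lemma pareto_le_clip: "pareto_le (clip x) x"
  by (simp add: clip_def pareto_le_def)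

lemma inner_one_clip_le: "1 \<bullet> clip x \<le> 1 \<bullet> x"
  unfolding inner_vec_def by (rule sum_mono) (simp add: clip_def)

lemma norm_clip_diff_le:
  assumes "y \<in> cbox 0 1"
  shows "norm (clip x - y) \<le> norm (x - y)"
  unfolding norm_le inner_vec_def
proof (rule sum_mono)
  fix i
  have "\<bar>min (x $ i) 1 - y $ i\<bar> \<le> \<bar>x $ i - y $ i\<bar>"
    using assms by (auto simp: mem_box_cart min_def)
  then show "(clip x - y) $ i \<bullet> (clip x - y) $ i \<le> (x - y) $ i \<bullet> (x - y) $ i"
    by (simp add: clip_def abs_le_square_iff flip: power2_eq_square)
qed

lemma gradients_at_doubled_maximum:
  fixes u v :: "real^'n \<Rightarrow> real"
  assumes u_clip: "\<forall>x\<in>pos_orthant. u (clip x) = u x"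
    and v_mono: "pareto_monotone_on cl_orthant v" and "0 \<le> c" "0 \<le> e"
    and "xa \<in> pos_orthant" "ya \<in> pos_orthant" "xa \<in> cbox 0 1" "ya \<in> cbox 0 1"
    and max: "\<And>x y. x \<in> cbox 0 1 \<Longrightarrow> y \<in> cbox 0 1 \<Longrightarrow>
      u x - v y - e * (1 \<bullet> y) - c * norm (x - y)^2 \<le> u xa - v ya - e * (1 \<bullet> ya) - c * norm (xa - ya)^2"
  shows "(2 * c) *\<^sub>R (xa - ya) \<in> superdiff u xa"
    and "(2 * c) *\<^sub>R (xa - ya) - e *\<^sub>R 1 \<in> subdiff v ya"
proof -
  show "(2 * c) *\<^sub>R (xa - ya) \<in> superdiff u xa"
  proof (rule superdiff_at_max_minus_paraboloid[OF open_pos_orthant \<open>xa \<in> pos_orthant\<close>])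
    fix y :: "real^'n"
    assume "y \<in> pos_orthant"
    have "c * norm (clip y - ya)^2 \<le> c * norm (y - ya)^2"
      using norm_clip_diff_le[OF \<open>ya \<in> cbox 0 1\<close>] \<open>0 \<le> c\<close> by (intro mult_left_mono power_mono) auto
    moreover have "u (clip y) = u y"
      using u_clip \<open>y \<in> pos_orthant\<close> by blast
    ultimately show "u y - c * norm (y - ya)^2 \<le> u xa - c * norm (xa - ya)^2"
      using max[OF clip_in_unit_cube[OF \<open>y \<in> pos_orthant\<close>] \<open>ya \<in> cbox 0 1\<close>] by linarith
  qed
  have "(2 * c) *\<^sub>R (xa - ya) \<in> subdiff (\<lambda>y. v y + (e *\<^sub>R 1) \<bullet> y) ya"
  proof (rule subdiff_at_min_plus_paraboloid[OF open_pos_orthant \<open>ya \<in> pos_orthant\<close>])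
    fix y :: "real^'n"
    assume "y \<in> pos_orthant"
    have "c * norm (clip y - xa)^2 \<le> c * norm (y - xa)^2"
      using norm_clip_diff_le[OF \<open>xa \<in> cbox 0 1\<close>] \<open>0 \<le> c\<close> by (intro mult_left_mono power_mono) auto
    moreover have "v (clip y) \<le> v y"
      using v_mono pareto_le_clip clip_in_unit_cube unit_cube_subset_cl_orthant
        pos_orthant_subset_cl_orthant \<open>y \<in> pos_orthant\<close>
      unfolding pareto_monotone_on_def by blast
    moreover have "e * (1 \<bullet> clip y) \<le> e * (1 \<bullet> y)"
      using inner_one_clip_le \<open>0 \<le> e\<close> by (rule mult_left_mono)
    ultimately show "v ya + (e *\<^sub>R 1) \<bullet> ya + c * norm (ya - xa)^2 \<le> v y + (e *\<^sub>R 1) \<bullet> y + c * norm (y - xa)^2"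
      using max[OF \<open>xa \<in> cbox 0 1\<close> clip_in_unit_cube[OF \<open>y \<in> pos_orthant\<close>]]
      by (simp add: norm_minus_commute)
  qed
  then show "(2 * c) *\<^sub>R (xa - ya) - e *\<^sub>R 1 \<in> subdiff v ya"
    by (rule subdiff_add_linear)
qed

lemma doubled_pair_in_pos_orthant:
  fixes u v :: "real^'n \<Rightarrow> real"
  assumes "\<forall>x\<in>cl_orthant - pos_orthant. u x \<le> v x"
    and "x \<in> cl_orthant" "y \<in> cl_orthant"
    and "\<bar>u x - u y\<bar> < u x - v y" "\<bar>v x - v y\<bar> < u x - v y"
  shows "x \<in> pos_orthant" "y \<in> pos_orthant"
proof -
  have "u x \<le> v x" if "x \<notin> pos_orthant"
    using assms(1,2) that by blast
  then show "x \<in> pos_orthant"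
    using assms(5) by (auto simp: abs_less_iff)
  have "u y \<le> v y" if "y \<notin> pos_orthant"
    using assms(1,3) that by blast
  then show "y \<in> pos_orthant"
    using assms(4) by (auto simp: abs_less_iff)
qed

lemma doubled_maximum_in_pos_orthant:
  fixes u v :: "real^'n \<Rightarrow> real"
  assumes "continuous_on cl_orthant u" "continuous_on cl_orthant v"
    and boundary: "\<forall>x\<in>cl_orthant - pos_orthant. u x \<le> v x"
    and "0 \<le> e" "z \<in> cbox 0 1" "e * (1 \<bullet> z) < u z - v z" "0 < \<eta>"
  obtains c xa ya where "0 < c" "xa \<in> pos_orthant" "ya \<in> pos_orthant"
    "xa \<in> cbox 0 1" "ya \<in> cbox 0 1" "dist xa ya < \<eta>"
    "\<And>x y. x \<in> cbox 0 1 \<Longrightarrow> y \<in> cbox 0 1 \<Longrightarrow>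
      u x - v y - e * (1 \<bullet> y) - c * norm (x - y)^2 \<le> u xa - v ya - e * (1 \<bullet> ya) - c * norm (xa - ya)^2"
proof -
  let ?K = "cbox (0::real^'n) 1"
  define m where "m = u z - v z - e * (1 \<bullet> z)"
  have "0 < m"
    using assms(6) by (simp add: m_def)
  have "continuous_on ?K u" "continuous_on ?K v"
    using assms(1,2) unit_cube_subset_cl_orthant by (auto intro: continuous_on_subset)
  then have "uniformly_continuous_on ?K u" "uniformly_continuous_on ?K v"
    by (simp_all add: compact_uniformly_continuous)
  then obtain \<eta>u \<eta>v where "0 < \<eta>u" "0 < \<eta>v"
    and \<eta>u: "\<And>x y. x \<in> ?K \<Longrightarrow> y \<in> ?K \<Longrightarrow> dist y x < \<eta>u \<Longrightarrow> dist (u y) (u x) < m"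
    and \<eta>v: "\<And>x y. x \<in> ?K \<Longrightarrow> y \<in> ?K \<Longrightarrow> dist y x < \<eta>v \<Longrightarrow> dist (v y) (v x) < m"
    using \<open>0 < m\<close> unfolding uniformly_continuous_on_def by metis
  have cont: "continuous_on (?K \<times> ?K) (\<lambda>w. u (fst w) - v (snd w) - e * (1 \<bullet> snd w))"
    using \<open>continuous_on ?K u\<close> \<open>continuous_on ?K v\<close>
    by (auto intro!: continuous_intros continuous_on_compose2[of ?K] simp: mem_Times_iff)
  obtain c xa ya where "0 < c" "xa \<in> ?K" "ya \<in> ?K" "norm (xa - ya) < min \<eta> (min \<eta>u \<eta>v)"
    and max: "\<And>x y. x \<in> ?K \<Longrightarrow> y \<in> ?K \<Longrightarrow>
      u x - v y - e * (1 \<bullet> y) - c * norm (x - y)^2 \<le> u xa - v ya - e * (1 \<bullet> ya) - c * norm (xa - ya)^2"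
    by (rule penalized_maximum_near_diagonal[OF compact_cbox _ cont, of "min \<eta> (min \<eta>u \<eta>v)"])
      (use \<open>0 < \<eta>\<close> \<open>0 < \<eta>u\<close> \<open>0 < \<eta>v\<close> \<open>z \<in> ?K\<close> in auto)
  have "0 \<le> 1 \<bullet> ya"
    using \<open>ya \<in> ?K\<close> unit_cube_subset_cl_orthant by (auto intro: inner_one_nonneg)
  then have "0 \<le> e * (1 \<bullet> ya)" "0 \<le> c * norm (xa - ya)^2"
    using \<open>0 \<le> e\<close> \<open>0 < c\<close> by simp_all
  then have "m \<le> u xa - v ya"
    using max[OF \<open>z \<in> ?K\<close> \<open>z \<in> ?K\<close>] by (simp add: m_def)
  moreover have close: "dist xa ya < \<eta>" "dist xa ya < \<eta>u" "dist xa ya < \<eta>v"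
    using \<open>norm (xa - ya) < _\<close> by (simp_all add: dist_norm)
  ultimately have "\<bar>u xa - u ya\<bar> < u xa - v ya" "\<bar>v xa - v ya\<bar> < u xa - v ya"
    using \<eta>u[of ya xa] \<eta>v[of ya xa] \<open>xa \<in> ?K\<close> \<open>ya \<in> ?K\<close> by (simp_all add: dist_real_def)
  moreover have "xa \<in> cl_orthant" "ya \<in> cl_orthant"
    using \<open>xa \<in> ?K\<close> \<open>ya \<in> ?K\<close> unit_cube_subset_cl_orthant by auto
  ultimately have "xa \<in> pos_orthant" "ya \<in> pos_orthant"
    using doubled_pair_in_pos_orthant[OF boundary] by simp_all
  then show ?thesis
    using \<open>xa \<in> ?K\<close> \<open>ya \<in> ?K\<close> close(1) max by (rule that[OF \<open>0 < c\<close>])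
qed

lemma perturbed_comparison_on_unit_cube:
  fixes f u v :: "real^'n \<Rightarrow> real"
  assumes f_uc: "uniformly_continuous_on pos_orthant f"
    and "continuous_on cl_orthant u" "continuous_on cl_orthant v"
    and sub: "visc_subsol f u" and super: "visc_supersol f v"
    and u_clip: "\<forall>x\<in>pos_orthant. u (clip x) = u x"
    and v_mono: "pareto_monotone_on cl_orthant v"
    and boundary: "\<forall>x\<in>cl_orthant - pos_orthant. u x \<le> v x"
    and "0 < e" "z \<in> cbox 0 1"
  shows "u z - v z \<le> e * (1 \<bullet> z)"
proof (rule ccontr)
  assume "\<not> u z - v z \<le> e * (1 \<bullet> z)"
  then have gap: "e * (1 \<bullet> z) < u z - v z"
    by simp
  have "0 < e ^ CARD('n)"
    using \<open>0 < e\<close> by simp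
  then obtain \<eta> where "0 < \<eta>" and \<eta>: "\<And>x y. x \<in> pos_orthant \<Longrightarrow> y \<in> pos_orthant \<Longrightarrow>
      dist y x < \<eta> \<Longrightarrow> dist (f y) (f x) < e ^ CARD('n)"
    using f_uc unfolding uniformly_continuous_on_def by metis
  obtain c xa ya where "0 < c" and pos: "xa \<in> pos_orthant" "ya \<in> pos_orthant"
    and "xa \<in> cbox 0 1" "ya \<in> cbox 0 1" "dist xa ya < \<eta>"
    and max: "\<And>x y. x \<in> cbox 0 1 \<Longrightarrow> y \<in> cbox 0 1 \<Longrightarrow>
      u x - v y - e * (1 \<bullet> y) - c * norm (x - y)^2 \<le> u xa - v ya - e * (1 \<bullet> ya) - c * norm (xa - ya)^2"
    using doubled_maximum_in_pos_orthant[OF assms(2,3) boundary less_imp_le[OF \<open>0 < e\<close>]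
        \<open>z \<in> cbox 0 1\<close> gap \<open>0 < \<eta>\<close>] by blast
  have "(2 * c) *\<^sub>R (xa - ya) \<in> superdiff u xa" "(2 * c) *\<^sub>R (xa - ya) - e *\<^sub>R 1 \<in> subdiff v ya"
    using gradients_at_doubled_maximum[OF u_clip v_mono _ _ pos \<open>xa \<in> cbox 0 1\<close> \<open>ya \<in> cbox 0 1\<close> max]
      \<open>0 < c\<close> \<open>0 < e\<close> by simp_all
  then have "f ya + e ^ CARD('n) \<le> f xa"
    using visc_gap_at_common_gradient[OF sub super v_mono uniformly_continuous_imp_continuous[OF f_uc] pos]
      \<open>0 < e\<close> by simp
  then show False
    using \<eta>[OF pos(2,1) \<open>dist xa ya < \<eta>\<close>] by (simp add: dist_real_def abs_less_iff)
qed

lemma comparison_on_unit_cube: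
  fixes f u v :: "real^'n \<Rightarrow> real"
  assumes "uniformly_continuous_on pos_orthant f"
    and "continuous_on cl_orthant u" "continuous_on cl_orthant v"
    and "visc_subsol f u" "visc_supersol f v"
    and "\<forall>x\<in>pos_orthant. u (clip x) = u x"
    and "pareto_monotone_on cl_orthant v"
    and "\<forall>x\<in>cl_orthant - pos_orthant. u x \<le> v x"
    and "z \<in> cbox 0 1"
  shows "u z \<le> v z"
proof (rule field_le_epsilon)
  fix e :: real
  assume "0 < e"
  have "0 \<le> 1 \<bullet> z"
    using assms(9) unit_cube_subset_cl_orthant by (auto intro: inner_one_nonneg)
  then have "0 < e / (1 \<bullet> z + 1)"
    using \<open>0 < e\<close> by simp
  then have "u z - v z \<le> e / (1 \<bullet> z + 1) * (1 \<bullet> z)"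
    by (rule perturbed_comparison_on_unit_cube[OF assms(1-8) _ assms(9)])
  also have "\<dots> \<le> e"
    using \<open>0 < e\<close> \<open>0 \<le> 1 \<bullet> z\<close> by (simp add: field_simps)
  finally show "u z \<le> v z + e"
    by simp
qed

theorem theorem2p8:
  fixes f u v :: "real^'n \<Rightarrow> real"
  assumes "CARD('n) \<ge> 2"
    and "uniformly_continuous_on pos_orthant f"
    and "closure {x\<in>pos_orthant. f x \<noteq> 0} \<subseteq> {x. \<forall>i. 0 \<le> x $ i \<and> x $ i \<le> 1}"
    and "continuous_on cl_orthant u" and "continuous_on cl_orthant v"
    and "visc_subsol f u" and "visc_supersol f v"
    and "\<forall>x\<in>pos_orthant. u x = u (\<chi> i. min (x $ i) 1)"
    and "pareto_monotone_on cl_orthant v"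
    and "\<forall>x\<in>cl_orthant - pos_orthant. u x \<le> v x"
  shows "\<forall>x\<in>pos_orthant. u x \<le> v x"
proof
  fix x :: "real^'n"
  assume "x \<in> pos_orthant"
  have u_clip: "\<forall>y\<in>pos_orthant. u (clip y) = u y"
    using assms(8) by (simp add: clip_def)
  have "u x = u (clip x)"
    using u_clip \<open>x \<in> pos_orthant\<close> by simp
  also have "\<dots> \<le> v (clip x)"
    using comparison_on_unit_cube[OF assms(2,4-7) u_clip assms(9,10)]
      clip_in_unit_cube[OF \<open>x \<in> pos_orthant\<close>] .
  also have "\<dots> \<le> v x"
    using assms(9) pareto_le_clip clip_in_unit_cube[OF \<open>x \<in> pos_orthant\<close>]
      unit_cube_subset_cl_orthant pos_orthant_subset_cl_orthant \<open>x \<in> pos_orthant\<close>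
    unfolding pareto_monotone_on_def by blast
  finally show "u x \<le> v x" .
qed

end
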